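(* Let $\Sigma$ be an alphabet with $|\Sigma|\geq 4$, let $\#\notin\Sigma$, let $S$ be a string of length $n$ over $\Sigma$, and let $P$ be a substring of $S$. Suppose that there is a string $S'$ obtained from $S$ by replacing the letters at $k$ positions with $\#$ such that $|\mathsf{occ}_S(P)|-|\mathsf{occ}_{S'}(P)|\geq y$ for some positive integer $y$. Then there is a string $S''\in\Sigma^n$ obtained from $S$ by $k$ substitutions with letters from $\Sigma$ (so $d_H(S,S'')\leq k$) such that $|\mathsf{occ}_S(P)|-|\mathsf{occ}_{S''}(P)|\geq y$.
   Context: $\mathsf{occ}_T(P)$ is the set of starting positions of occurrences of $P$ in $T$; $d_H$ is the Hamming distance between strings of equal length. *)

theory Defs
  imports Main
begin

definition occ :: "'a list \<Rightarrow> 'a list \<Rightarrow> nat set" where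
  "occ T P = {i. i + length P \<le> length T \<and> take (length P) (drop i T) = P}"

definition hamming :: "'a list \<Rightarrow> 'a list \<Rightarrow> nat" where
  "hamming xs ys = card {i. i < length xs \<and> xs ! i \<noteq> ys ! i}"

definition mask :: "'a list \<Rightarrow> nat set \<Rightarrow> 'a \<Rightarrow> 'a list" where
  "mask S K h = map (\<lambda>i. if i \<in> K then h else S ! i) [0..<length S]"

end

theory Submission
  imports Defs
begin

text \<open>Fill the masked positions one at a time. A letter c put at position j creates a new
  occurrence of P only if some window through j already matches P everywhere except at j and
  asks for c there. Among three such windows the outer two ask for the same letter, so at most
  two letters are forbidden, and an alphabet of three letters always leaves a safe choice.
  Filling never creates occurrences, hence never undoes the destruction achieved by the mask.\<close>

lemma mem_occ_iff_nth:
  "i \<in> occ T P \<longleftrightarrow> i + length P \<le> length T \<and> (\<forall>p<length P. T ! (i + p) = P ! p)"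
  unfolding occ_def by (auto simp: list_eq_iff_nth_eq)

lemma finite_occ: "finite (occ T P)"
  by (rule finite_subset[of _ "{..length T}"]) (auto simp: occ_def)

definition occ_except :: "'a list \<Rightarrow> 'a list \<Rightarrow> nat \<Rightarrow> nat \<Rightarrow> bool" where
  "occ_except T P j i \<longleftrightarrow> i \<le> j \<and> j < i + length P \<and> i + length P \<le> length T \<and>
     (\<forall>p. i \<le> p \<and> p < i + length P \<and> p \<noteq> j \<longrightarrow> T ! p = P ! (p - i))"

definition completing_letters :: "'a list \<Rightarrow> 'a list \<Rightarrow> nat \<Rightarrow> 'a set" where
  "completing_letters T P j = {P ! (j - i) | i. occ_except T P j i}"

lemma occ_except_outer_letters_eq:
  assumes w1: "occ_except T P j i1" and w2: "occ_except T P j i2" and w3: "occ_except T P j i3"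
    and "i1 < i2" "i2 < i3"
  shows "P ! (j - i1) = P ! (j - i3)"
proof -
  have match: "T ! p = P ! (p - i)"
    if "occ_except T P j i" "i \<le> p" "p < i + length P" "p \<noteq> j" for i p
    using that unfolding occ_except_def by blast
  have bounds: "i1 \<le> j" "j < i1 + length P" "i3 \<le> j"
    using w1 w3 unfolding occ_except_def by auto
  \<comment> \<open>Both sides equal P ! (j + i2 - i1 - i3), read off position j + i2 - i1 through the
    windows i2, i3 and off position j + i2 - i3 through the windows i1, i2.\<close>
  define p1 where "p1 = j + i2 - i1"
  define p2 where "p2 = j + i2 - i3"
  have "P ! (j - i1) = T ! p1"
    using match[OF w2, of p1] assms(4,5) bounds by (simp add: p1_def)
  also have "\<dots> = P ! (p1 - i3)"
    using match[OF w3, of p1] assms(4,5) bounds by (simp add: p1_def)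
  also have "p1 - i3 = p2 - i1"
    using assms(4,5) bounds by (simp add: p1_def p2_def)
  also have "P ! (p2 - i1) = T ! p2"
    using match[OF w1, of p2] assms(4,5) bounds by (simp add: p2_def)
  also have "\<dots> = P ! (j - i3)"
    using match[OF w2, of p2] assms(4,5) bounds by (simp add: p2_def)
  finally show ?thesis .
qed

lemma finite_completing_letters: "finite (completing_letters T P j)"
proof (rule finite_subset)
  show "completing_letters T P j \<subseteq> (\<lambda>i. P ! (j - i)) ` {..j}"
    unfolding completing_letters_def occ_except_def by auto
qed simp

lemma card_completing_letters_le_2: "card (completing_letters T P j) \<le> 2"
proof (rule ccontr)
  assume "\<not> ?thesis"
  then obtain A where "A \<subseteq> completing_letters T P j" "card A = 3"
    using obtain_subset_with_card_n[of 3 "completing_letters T P j"] by force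
  then obtain a b c where abc: "{a, b, c} \<subseteq> completing_letters T P j"
    and distinct: "a \<noteq> b" "b \<noteq> c" "a \<noteq> c"
    by (auto simp: card_3_iff)
  obtain x where x: "occ_except T P j x" "a = P ! (j - x)"
    using abc unfolding completing_letters_def by auto
  obtain y where y: "occ_except T P j y" "b = P ! (j - y)"
    using abc unfolding completing_letters_def by auto
  obtain z where z: "occ_except T P j z" "c = P ! (j - z)"
    using abc unfolding completing_letters_def by auto
  have "x \<noteq> y" "y \<noteq> z" "x \<noteq> z" using x y z distinct by auto
  then consider "x < y" "y < z" | "x < z" "z < y" | "y < x" "x < z"
    | "y < z" "z < x" | "z < x" "x < y" | "z < y" "y < x"
    by linarith
  then show False
    by cases (metis occ_except_outer_letters_eq x(1) y(1) z(1) x(2) y(2) z(2) distinct)+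
qed

lemma exists_non_completing_letter:
  assumes "finite \<Sigma>" "card \<Sigma> \<ge> 3"
  obtains c where "c \<in> \<Sigma>" "c \<notin> completing_letters T P j"
proof -
  have "\<not> \<Sigma> \<subseteq> completing_letters T P j"
  proof
    assume "\<Sigma> \<subseteq> completing_letters T P j"
    then have "card \<Sigma> \<le> card (completing_letters T P j)"
      by (rule card_mono[OF finite_completing_letters])
    with assms(2) card_completing_letters_le_2[of T P j] show False by linarith
  qed
  then show ?thesis using that by blast
qed

lemma occ_update_subset:
  assumes "j < length T" "T ! j \<notin> set P" "c \<notin> completing_letters T P j"
  shows "occ (T[j := c]) P \<subseteq> occ T P"
proof
  fix i assume "i \<in> occ (T[j := c]) P"
  then have len: "i + length P \<le> length T"
    and match: "\<forall>p<length P. T[j := c] ! (i + p) = P ! p"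
    by (auto simp: mem_occ_iff_nth)
  show "i \<in> occ T P"
  proof (cases "i \<le> j \<and> j < i + length P")
    case True
    have "occ_except T P j i"
      unfolding occ_except_def
    proof (intro conjI allI impI)
      fix p assume p: "i \<le> p \<and> p < i + length P \<and> p \<noteq> j"
      then have "p - i < length P" by linarith
      then show "T ! p = P ! (p - i)"
        using match[rule_format, of "p - i"] p by simp
    qed (use True len in auto)
    moreover have "c = P ! (j - i)"
    proof -
      have "j - i < length P" using True by linarith
      then show ?thesis using match[rule_format, of "j - i"] True assms(1) by simp
    qed
    ultimately show ?thesis
      using assms(3) unfolding completing_letters_def by blast
  next
    case False
    have "T ! (i + p) = P ! p" if "p < length P" for p
    proof -
      have "i + p \<noteq> j" using False that by linarith
      then show ?thesis using match[rule_format, OF that] by simp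
    qed
    then show ?thesis using len by (simp add: mem_occ_iff_nth)
  qed
qed

lemma replace_foreign_letters_occ_subset:
  assumes "finite \<Sigma>" "card \<Sigma> \<ge> 3" "set P \<subseteq> \<Sigma>"
  obtains T' where "length T' = length T" "set T' \<subseteq> \<Sigma>"
    "\<forall>i<length T. T ! i \<in> \<Sigma> \<longrightarrow> T' ! i = T ! i" "occ T' P \<subseteq> occ T P"
proof -
  have "\<exists>T'. length T' = length T \<and> set T' \<subseteq> \<Sigma> \<and>
      (\<forall>i<length T. T ! i \<in> \<Sigma> \<longrightarrow> T' ! i = T ! i) \<and> occ T' P \<subseteq> occ T P"
  proof (induction "card {i. i < length T \<and> T ! i \<notin> \<Sigma>}" arbitrary: T)
    case 0
    then have "set T \<subseteq> \<Sigma>" by (auto simp: in_set_conv_nth)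
    then show ?case by blast
  next
    case (Suc N)
    then have "{i. i < length T \<and> T ! i \<notin> \<Sigma>} \<noteq> {}" by force
    then obtain j where j: "j < length T" "T ! j \<notin> \<Sigma>" by blast
    obtain c where c: "c \<in> \<Sigma>" "c \<notin> completing_letters T P j"
      using exists_non_completing_letter[OF assms(1,2)] .
    have foreign: "{i. i < length (T[j := c]) \<and> T[j := c] ! i \<notin> \<Sigma>}
        = {i. i < length T \<and> T ! i \<notin> \<Sigma>} - {j}"
      using c(1) j(1) by (auto simp: nth_list_update)
    have "N = card {i. i < length (T[j := c]) \<and> T[j := c] ! i \<notin> \<Sigma>}"
      unfolding foreign using Suc.hyps(2) j by simp
    from Suc.hyps(1)[OF this] obtain T' where T': "length T' = length T" "set T' \<subseteq> \<Sigma>"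
        "\<forall>i<length T. T[j := c] ! i \<in> \<Sigma> \<longrightarrow> T' ! i = T[j := c] ! i"
        "occ T' P \<subseteq> occ (T[j := c]) P"
      by auto
    have "occ (T[j := c]) P \<subseteq> occ T P"
      using occ_update_subset[OF j(1) _ c(2)] j(2) assms(3) by blast
    moreover have "\<forall>i<length T. T ! i \<in> \<Sigma> \<longrightarrow> T' ! i = T ! i"
    proof (intro allI impI)
      fix i assume i: "i < length T" "T ! i \<in> \<Sigma>"
      then have "i \<noteq> j" using j(2) by auto
      then show "T' ! i = T ! i" using T'(3) i by simp
    qed
    ultimately show ?case using T' by blast
  qed
  then show ?thesis using that by blast
qed

lemma length_mask [simp]: "length (mask S K h) = length S"
  by (simp add: mask_def)

lemma nth_mask [simp]: "i < length S \<Longrightarrow> mask S K h ! i = (if i \<in> K then h else S ! i)"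
  by (simp add: mask_def)

lemma hamming_le_card:
  assumes "finite K" "\<forall>i<length xs. i \<notin> K \<longrightarrow> xs ! i = ys ! i"
  shows "hamming xs ys \<le> card K"
  unfolding hamming_def using assms by (intro card_mono) auto

theorem lemma11:
  fixes \<Sigma> :: "'a set" and hash :: 'a and S P :: "'a list" and n k y :: nat
  assumes "finite \<Sigma>" and "card \<Sigma> \<ge> 4"
    and "hash \<notin> \<Sigma>"
    and "set S \<subseteq> \<Sigma>" and "length S = n"
    and "\<exists>u v. S = u @ P @ v"
    and "y > 0"
    and "\<exists>K. K \<subseteq> {..<n} \<and> card K = k \<and>
           int (card (occ S P)) - int (card (occ (mask S K hash) P)) \<ge> int y"
  shows "\<exists>S''. length S'' = n \<and> set S'' \<subseteq> \<Sigma> \<and> hamming S S'' \<le> k \<and>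
           int (card (occ S P)) - int (card (occ S'' P)) \<ge> int y"
proof -
  obtain K where K: "K \<subseteq> {..<n}" "card K = k"
    and destroyed: "int (card (occ S P)) - int (card (occ (mask S K hash) P)) \<ge> int y"
    using assms(8) by blast
  have "set P \<subseteq> \<Sigma>" using assms(4,6) by auto
  then obtain S'' where S'': "length S'' = n" "set S'' \<subseteq> \<Sigma>"
      "\<forall>i<n. mask S K hash ! i \<in> \<Sigma> \<longrightarrow> S'' ! i = mask S K hash ! i"
      "occ S'' P \<subseteq> occ (mask S K hash) P"
    using replace_foreign_letters_occ_subset[OF assms(1) _ _, of P "mask S K hash"] assms(2,5)
    by auto
  have "\<forall>i<n. i \<notin> K \<longrightarrow> S ! i = S'' ! i"
    using S''(3) assms(4,5) by (auto dest: nth_mem)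
  then have "hamming S S'' \<le> k"
    using hamming_le_card[of K S S''] K finite_subset assms(5) by blast
  moreover have "card (occ S'' P) \<le> card (occ (mask S K hash) P)"
    using S''(4) by (rule card_mono[OF finite_occ])
  ultimately show ?thesis using S''(1,2) destroyed by force
qed

end
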